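(* Let $G$ be a finite simple graph, let $J\in \mathcal{E}\mathcal{C}(G)$, and let $e$ be a pair of distinct vertices of $G$. Then: (1) for $I\subseteq J$, $I\in\mathcal{E}\mathcal{C}(G)$ if and only if $I\in\mathcal{E}\mathcal{C}(G|_J)$; (2) for $J\subseteq I\subseteq V(G)$, $I\in\mathcal{E}\mathcal{C}(G)$ if and only if $I\setminus J\in\mathcal{E}\mathcal{C}(G^\ast_J)$; (3) $\mathcal{E}\mathcal{C}(G)\subseteq\mathcal{E}\mathcal{C}(G+e)$, and every $I\in\mathcal{E}\mathcal{C}(G+e)\setminus\mathcal{E}\mathcal{C}(G)$ satisfies $e\subseteq I$.
   Context: All graphs are finite simple graphs; $G|_I$ is the induced subgraph on $I\subseteq V(G)$. $\mathcal{E}\mathcal{C}(G)=\{I\subseteq V(G): G|_I \text{ has no connected component of odd order}\}$ (so $\emptyset\in\mathcal{E}\mathcal{C}(G)$). For a pair $e$ of distinct vertices, $G+e$ is the graph obtained from $G$ by adding $e$ as an edge ($G+e=G$ if $e$ is already an edge). The reconnected complement $G^\ast_I$ is the graph on $V(G)\setminus I$ in which $\{a,b\}$ is an edge iff there is a path from $a$ to $b$ in $G|_{I\cup\{a,b\}}$. *)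

theory Defs
  imports Main
begin

definition simple_graph :: "'a set \<Rightarrow> 'a set set \<Rightarrow> bool" where
  "simple_graph V E \<longleftrightarrow> finite V \<and> (\<forall>e\<in>E. e \<subseteq> V \<and> card e = 2)"

definition induced_edges :: "'a set set \<Rightarrow> 'a set \<Rightarrow> 'a set set" where
  "induced_edges E I = {e \<in> E. e \<subseteq> I}"

definition adj_rel :: "'a set \<Rightarrow> 'a set set \<Rightarrow> ('a \<times> 'a) set" where
  "adj_rel V E = {(x, y). x \<in> V \<and> y \<in> V \<and> {x, y} \<in> E}"

definition component :: "'a set \<Rightarrow> 'a set set \<Rightarrow> 'a \<Rightarrow> 'a set" where
  "component V E v = {u \<in> V. (v, u) \<in> (adj_rel V E)\<^sup>*}"

definition EC :: "'a set \<Rightarrow> 'a set set \<Rightarrow> 'a set set" where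
  "EC V E = {I. I \<subseteq> V \<and> (\<forall>v\<in>I. even (card (component I (induced_edges E I) v)))}"

text \<open>Edge set of the reconnected complement G^*_I (on vertex set V - I):
  {a,b} is an edge iff there is a path from a to b in G|_(I \<union> {a,b}).\<close>
definition reconnected_edges :: "'a set \<Rightarrow> 'a set set \<Rightarrow> 'a set \<Rightarrow> 'a set set" where
  "reconnected_edges V E I =
     {{a, b} | a b. a \<in> V - I \<and> b \<in> V - I \<and> a \<noteq> b \<and>
        (a, b) \<in> (adj_rel (I \<union> {a, b}) (induced_edges E (I \<union> {a, b})))\<^sup>*}"

end

theory Submission
  imports Defs
begin

text \<open>Whether I belongs to EC(G) depends only on the induced subgraph G|_I; this gives (1)
  and the second half of (3). Adding edges only merges components of G|_I, and a union of
  even components is even, which gives the first half of (3).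

  For (2), let J \<subseteq> I with J \<in> EC(G) and let C be a component of G|_I. Then C \<inter> J is a union
  of components of G|_J, all of even order, so |C| and |C - J| have the same parity. Moreover
  C - J is a component of G^*_J restricted to I - J: a path of G|_I between two vertices
  outside J splits, at its vertices outside J, into segments whose interior lies in J, and
  these segments are exactly edges of G^*_J.\<close>

definition induced_adj :: "'a set set \<Rightarrow> 'a set \<Rightarrow> ('a \<times> 'a) set" where
  "induced_adj E S = {(x, y). x \<in> S \<and> y \<in> S \<and> {x, y} \<in> E}"

definition induced_component :: "'a set set \<Rightarrow> 'a set \<Rightarrow> 'a \<Rightarrow> 'a set" where
  "induced_component E S v = {u \<in> S. (v, u) \<in> (induced_adj E S)\<^sup>*}"

lemma adj_rel_induced_edges: "adj_rel S (induced_edges E S) = induced_adj E S"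
  unfolding adj_rel_def induced_edges_def induced_adj_def by auto

lemma EC_iff: "I \<in> EC V E \<longleftrightarrow> I \<subseteq> V \<and> (\<forall>v\<in>I. even (card (induced_component E I v)))"
  unfolding EC_def component_def induced_component_def adj_rel_induced_edges by auto

lemma EC_cong:
  assumes "I \<subseteq> V" "I \<subseteq> V'" "induced_adj E I = induced_adj E' I"
  shows "I \<in> EC V E \<longleftrightarrow> I \<in> EC V' E'"
  using assms unfolding EC_iff induced_component_def by simp

lemma sym_induced_adj: "sym (induced_adj E S)"
  unfolding sym_def induced_adj_def by (auto simp: insert_commute)

lemma induced_adj_rtrancl_sym:
  "(x, y) \<in> (induced_adj E S)\<^sup>* \<Longrightarrow> (y, x) \<in> (induced_adj E S)\<^sup>*"
  using sym_rtrancl[OF sym_induced_adj] by (rule symD)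

lemma induced_adj_rtranclD:
  "(x, y) \<in> (induced_adj E S)\<^sup>* \<Longrightarrow> x = y \<or> x \<in> S \<and> y \<in> S"
  by (induction rule: rtrancl_induct) (auto simp: induced_adj_def)

lemma induced_adj_rtrancl_mono:
  "S \<subseteq> S' \<Longrightarrow> E \<subseteq> E' \<Longrightarrow> (induced_adj E S)\<^sup>* \<subseteq> (induced_adj E' S')\<^sup>*"
  by (rule rtrancl_mono) (auto simp: induced_adj_def)

lemma induced_component_subset: "induced_component E S v \<subseteq> S"
  unfolding induced_component_def by auto

lemma self_in_induced_component: "v \<in> S \<Longrightarrow> v \<in> induced_component E S v"
  unfolding induced_component_def by auto

lemma induced_component_eq:
  "u \<in> induced_component E S v \<Longrightarrow> induced_component E S u = induced_component E S v"
  unfolding induced_component_def using induced_adj_rtrancl_sym[of v u E S]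
  by (auto intro: rtrancl_trans)

lemma even_card_union_of_components:
  assumes "finite J" "\<forall>w\<in>J. even (card (induced_component E J w))"
    and "T \<subseteq> J" "\<forall>w\<in>T. induced_component E J w \<subseteq> T"
  shows "even (card T)"
proof -
  let ?C = "induced_component E J ` T"
  have T: "T = \<Union> ?C"
    using assms(3,4) self_in_induced_component[of _ J E] by blast
  have "2 dvd card (\<Union> ?C)"
  proof (rule dvd_partition)
    show "finite (\<Union> ?C)" using T assms(1,3) by (metis finite_subset)
    show "\<forall>c\<in>?C. 2 dvd card c" using assms(2,3) by auto
    show "\<forall>c1\<in>?C. \<forall>c2\<in>?C. c1 \<noteq> c2 \<longrightarrow> c1 \<inter> c2 = {}"
    proof (intro ballI impI)
      fix c1 c2 assume c: "c1 \<in> ?C" "c2 \<in> ?C" "c1 \<noteq> c2"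
      show "c1 \<inter> c2 = {}"
      proof (rule ccontr)
        assume "c1 \<inter> c2 \<noteq> {}"
        with c obtain v1 v2 x where "c1 = induced_component E J v1" "c2 = induced_component E J v2"
          "x \<in> c1" "x \<in> c2" by blast
        then have "c1 = c2" using induced_component_eq by metis
        with c(3) show False ..
      qed
    qed
  qed
  with T show ?thesis by simp
qed

lemma even_card_Int_induced_component:
  assumes "finite J" "\<forall>w\<in>J. even (card (induced_component E J w))"
    and "J \<subseteq> I" "E \<subseteq> E'"
  shows "even (card (induced_component E' I v \<inter> J))"
proof (rule even_card_union_of_components[OF assms(1,2)])
  show "\<forall>w\<in>induced_component E' I v \<inter> J. induced_component E J w \<subseteq> induced_component E' I v \<inter> J"
  proof (intro ballI subsetI)
    fix w u assume w: "w \<in> induced_component E' I v \<inter> J" and u: "u \<in> induced_component E J w"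
    have "(w, u) \<in> (induced_adj E' I)\<^sup>*"
      using u induced_adj_rtrancl_mono[OF assms(3,4)] unfolding induced_component_def by auto
    moreover have "(v, w) \<in> (induced_adj E' I)\<^sup>*" using w unfolding induced_component_def by simp
    moreover have "u \<in> J" using u induced_component_subset by fast
    ultimately show "u \<in> induced_component E' I v \<inter> J"
      using assms(3) unfolding induced_component_def by (auto intro: rtrancl_trans)
  qed
qed blast

lemma EC_mono_edges:
  assumes "finite V" "E \<subseteq> E'" "I \<in> EC V E"
  shows "I \<in> EC V E'"
proof -
  have I: "I \<subseteq> V" "\<forall>w\<in>I. even (card (induced_component E I w))"
    using assms(3) unfolding EC_iff by auto
  have "even (card (induced_component E' I v))" for v
    using even_card_Int_induced_component[OF finite_subset[OF I(1) assms(1)] I(2) subset_refl assms(2)]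
    by (simp add: Int_absorb2 induced_component_subset)
  with I(1) show ?thesis unfolding EC_iff by blast
qed

lemma EC_insert_edge_imp_EC:
  assumes "I \<in> EC V (insert e E)" "\<not> e \<subseteq> I"
  shows "I \<in> EC V E"
proof -
  have "induced_adj (insert e E) I = induced_adj E I"
    using assms(2) unfolding induced_adj_def by auto
  moreover have "I \<subseteq> V" using assms(1) unfolding EC_iff by blast
  ultimately show ?thesis using EC_cong[of I V V "insert e E" E] assms(1) by blast
qed

lemma EC_induced_subgraph_iff:
  assumes "J \<subseteq> V" "I \<subseteq> J"
  shows "I \<in> EC V E \<longleftrightarrow> I \<in> EC J (induced_edges E J)"
proof (rule EC_cong)
  show "induced_adj E I = induced_adj (induced_edges E J) I"
    using assms(2) unfolding induced_adj_def induced_edges_def by auto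
qed (use assms in auto)

lemma even_card_induced_component_Diff:
  assumes "finite I" "J \<in> EC V E" "J \<subseteq> I"
  shows "even (card (induced_component E I v)) \<longleftrightarrow> even (card (induced_component E I v - J))"
proof -
  let ?C = "induced_component E I v"
  have "even (card (?C \<inter> J))"
    using even_card_Int_induced_component[OF finite_subset[OF assms(3,1)] _ assms(3) subset_refl]
      assms(2) unfolding EC_iff by blast
  moreover have "card ?C = card (?C \<inter> J) + card (?C - J)"
    using finite_subset[OF induced_component_subset assms(1)] by (rule card_Int_Diff)
  ultimately show ?thesis by presburger
qed

lemma induced_adj_reconnected_edges:
  "induced_adj (reconnected_edges V E J) S =
    {(x, y). x \<in> S \<and> y \<in> S \<and> (\<exists>a b. {x, y} = {a, b} \<and> a \<in> V - J \<and> b \<in> V - J \<and> a \<noteq> b \<and>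
       (a, b) \<in> (induced_adj E (J \<union> {a, b}))\<^sup>*)}"
  unfolding induced_adj_def reconnected_edges_def adj_rel_induced_edges by blast

lemma reconnected_path_imp_path:
  assumes "J \<subseteq> I" "(a, u) \<in> (induced_adj (reconnected_edges V E J) (I - J))\<^sup>*"
  shows "(a, u) \<in> (induced_adj E I)\<^sup>*"
proof -
  have "induced_adj (reconnected_edges V E J) (I - J) \<subseteq> (induced_adj E I)\<^sup>*"
  proof safe
    fix x y assume "(x, y) \<in> induced_adj (reconnected_edges V E J) (I - J)"
    then obtain a b where xy: "x \<in> I" "y \<in> I" "{x, y} = {a, b}"
      and ab: "(a, b) \<in> (induced_adj E (J \<union> {a, b}))\<^sup>*"
      unfolding induced_adj_reconnected_edges by blast
    have "J \<union> {a, b} \<subseteq> I" using xy assms(1) by (auto simp: doubleton_eq_iff)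
    then have "(a, b) \<in> (induced_adj E I)\<^sup>*" using ab induced_adj_rtrancl_mono by blast
    then show "(x, y) \<in> (induced_adj E I)\<^sup>*"
      using xy(3) induced_adj_rtrancl_sym by (metis doubleton_eq_iff)
  qed
  then show ?thesis using assms(2) rtrancl_subset_rtrancl by blast
qed

text \<open>Invariant along a path from a: c is the last vertex outside J visited so far, and the
  path since c has stayed inside J.\<close>

lemma path_imp_reconnected_path:
  assumes "J \<subseteq> I" "I \<subseteq> V" "(a, u) \<in> (induced_adj E I)\<^sup>*" "a \<in> I - J"
  shows "\<exists>c\<in>I - J. (a, c) \<in> (induced_adj (reconnected_edges V E J) (I - J))\<^sup>* \<and>
           (c, u) \<in> (induced_adj E (insert c J))\<^sup>*"
  using assms(3)
proof (induction rule: rtrancl_induct)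
  case base
  then show ?case using assms(4) by blast
next
  case (step u w)
  then obtain c where c: "c \<in> I - J" "(a, c) \<in> (induced_adj (reconnected_edges V E J) (I - J))\<^sup>*"
    "(c, u) \<in> (induced_adj E (insert c J))\<^sup>*" by blast
  have uw: "u \<in> I" "w \<in> I" "{u, w} \<in> E" using step(2) unfolding induced_adj_def by auto
  have u: "u \<in> insert c J" using induced_adj_rtranclD[OF c(3)] by auto
  consider "w \<in> J" | "w = c" | "w \<notin> J" "w \<noteq> c" by blast
  then show ?case
  proof cases
    case 1
    then have "(u, w) \<in> induced_adj E (insert c J)" using u uw unfolding induced_adj_def by auto
    then show ?thesis using c by (meson rtrancl.rtrancl_into_rtrancl)
  next
    case 2
    then show ?thesis using c by auto
  next
    case 3
    have "(c, u) \<in> (induced_adj E (J \<union> {c, w}))\<^sup>*"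
      using c(3) induced_adj_rtrancl_mono[of "insert c J" "J \<union> {c, w}" E E] by auto
    moreover have "(u, w) \<in> induced_adj E (J \<union> {c, w})" using u uw unfolding induced_adj_def by auto
    ultimately have "(c, w) \<in> (induced_adj E (J \<union> {c, w}))\<^sup>*" by (rule rtrancl.rtrancl_into_rtrancl)
    then have "(c, w) \<in> induced_adj (reconnected_edges V E J) (I - J)"
      unfolding induced_adj_reconnected_edges using c(1) 3 uw(2) assms(2) by blast
    then have "(a, w) \<in> (induced_adj (reconnected_edges V E J) (I - J))\<^sup>*"
      using c(2) by (rule rtrancl.rtrancl_into_rtrancl[rotated])
    then show ?thesis using 3 uw(2) by blast
  qed
qed

lemma induced_component_reconnected_edges:
  assumes "J \<subseteq> I" "I \<subseteq> V" "a \<in> I - J"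
  shows "induced_component (reconnected_edges V E J) (I - J) a = induced_component E I a - J"
proof safe
  fix u assume "u \<in> induced_component (reconnected_edges V E J) (I - J) a"
  then show "u \<in> induced_component E I a"
    using reconnected_path_imp_path[OF assms(1)] unfolding induced_component_def by auto
next
  fix u assume "u \<in> induced_component (reconnected_edges V E J) (I - J) a" "u \<in> J"
  then show False unfolding induced_component_def by auto
next
  fix u assume u: "u \<in> induced_component E I a" "u \<notin> J"
  then obtain c where c: "c \<in> I - J" "(a, c) \<in> (induced_adj (reconnected_edges V E J) (I - J))\<^sup>*"
      "(c, u) \<in> (induced_adj E (insert c J))\<^sup>*"
    using path_imp_reconnected_path[OF assms(1,2) _ assms(3)] unfolding induced_component_def by blast
  have "u = c" using induced_adj_rtranclD[OF c(3)] u(2) by auto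
  with c show "u \<in> induced_component (reconnected_edges V E J) (I - J) a"
    unfolding induced_component_def by auto
qed

lemma EC_iff_reconnected:
  assumes "finite V" "J \<in> EC V E" "J \<subseteq> I" "I \<subseteq> V"
  shows "I \<in> EC V E \<longleftrightarrow> I - J \<in> EC (V - J) (reconnected_edges V E J)"
proof -
  let ?C = "induced_component E I"
  have parity: "even (card (?C v)) \<longleftrightarrow> even (card (?C v - J))" for v
    using even_card_induced_component_Diff[OF finite_subset[OF assms(4,1)] assms(2,3)] .
  have reconnected: "induced_component (reconnected_edges V E J) (I - J) a = ?C a - J"
    if "a \<in> I - J" for a
    using induced_component_reconnected_edges[OF assms(3,4) that] .
  have "(\<forall>v\<in>I. even (card (?C v))) \<longleftrightarrow> (\<forall>a\<in>I - J. even (card (?C a - J)))"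
  proof
    assume "\<forall>a\<in>I - J. even (card (?C a - J))"
    show "\<forall>v\<in>I. even (card (?C v))"
    proof
      fix v assume "v \<in> I"
      show "even (card (?C v))"
      proof (cases "?C v - J = {}")
        case False
        then obtain a where a: "a \<in> ?C v" "a \<notin> J" by blast
        then have "a \<in> I - J" using induced_component_subset by fast
        with a \<open>\<forall>a\<in>I - J. even (card (?C a - J))\<close> show ?thesis
          using parity induced_component_eq[OF a(1)] by metis
      next
        case True
        then have "even (card (?C v - J))" by (simp only: card.empty even_zero)
        with parity show ?thesis by blast
      qed
    qed
  qed (use parity in blast)
  then show ?thesis using assms(4) reconnected unfolding EC_iff by auto
qed

theorem mainTheorem4:
  fixes V :: "'a set" and E :: "'a set set" and J :: "'a set" and e :: "'a set"
  assumes G: "simple_graph V E"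
    and J: "J \<in> EC V E"
    and e: "e \<subseteq> V" "card e = 2"
  shows "(\<forall>I. I \<subseteq> J \<longrightarrow> (I \<in> EC V E \<longleftrightarrow> I \<in> EC J (induced_edges E J)))
       \<and> (\<forall>I. J \<subseteq> I \<and> I \<subseteq> V \<longrightarrow>
              (I \<in> EC V E \<longleftrightarrow> I - J \<in> EC (V - J) (reconnected_edges V E J)))
       \<and> EC V E \<subseteq> EC V (E \<union> {e})
       \<and> (\<forall>I \<in> EC V (E \<union> {e}) - EC V E. e \<subseteq> I)"
proof -
  have fin: "finite V" using G unfolding simple_graph_def by blast
  have JV: "J \<subseteq> V" using J unfolding EC_iff by blast
  show ?thesis
  proof (intro conjI allI impI ballI)
    show "I \<in> EC V E \<longleftrightarrow> I \<in> EC J (induced_edges E J)" if "I \<subseteq> J" for I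
      using EC_induced_subgraph_iff[OF JV that] .
    show "I \<in> EC V E \<longleftrightarrow> I - J \<in> EC (V - J) (reconnected_edges V E J)"
      if "J \<subseteq> I \<and> I \<subseteq> V" for I
      using EC_iff_reconnected[OF fin J] that by blast
    show "EC V E \<subseteq> EC V (E \<union> {e})"
      using EC_mono_edges[OF fin] by blast
    show "e \<subseteq> I" if "I \<in> EC V (E \<union> {e}) - EC V E" for I
      using EC_insert_edge_imp_EC[of I V e E] that by auto
  qed
qed

end
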